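(* Let the notation be as in the context, and for $\hat u\in U(\mathfrak g)$, $P\in\hat S(\mathfrak g^* )$ put $\langle\hat u,P\rangle_\phi:=\epsilon_S(P\triangleleft\hat u)$. For multiindices $I,J,K$: (iii) if $|I|<|J|$, then every monomial occurring in $\partial^J\triangleleft\hat x_I$ has degree at least $|J|-|I|$; (iv) if $|I|=|J|$, then $\partial^J\triangleleft\hat x_I-I!\,\delta^I_J$ has zero constant term; (v) $\langle\hat x_J,\partial^K\rangle_\phi=K!\,\delta^K_J$ whenever $K\ge J$ in the componentwise partial order; (vi) there is a unique family $\{\partial^{\{K\}}\}_{K\in\mathbb N_0^n}$ of elements of $\hat S(\mathfrak g^* )$ such that $\langle\hat x_J,\partial^{\{K\}}\rangle_\phi=K!\,\delta^K_J$ for all multiindices $K,J$.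
   Context: Let $k$ be a field of characteristic zero and $\mathfrak g$ a Lie algebra over $k$ of finite dimension $n$ with basis $\hat x_1,\dots,\hat x_n$ and $[\hat x_\mu,\hat x_\nu]=C^\lambda_{\mu\nu}\hat x_\lambda$; summation over repeated indices is understood. $U(\mathfrak g)$ is its universal enveloping algebra (a cocommutative Hopf algebra with $\hat x_\mu$ primitive, counit $\epsilon$, Sweedler notation $\Delta(u)=\sum u_{(1)}\otimes u_{(2)}$). $\hat S(\mathfrak g^* ):=k[[\partial^1,\dots,\partial^n]]$, and $\epsilon_S:\hat S(\mathfrak g^* )\to k$ is the constant-term map. Let $\mathcal C^\alpha_\beta:=C^\alpha_{\beta\gamma}\partial^\gamma$ and $\phi:=\frac{-\mathcal C}{e^{-\mathcal C}-1}=\sum_{N\ge0}\frac{(-1)^NB_N}{N!}\mathcal C^N$ ($B_N$ Bernoulli numbers), a matrix with entries in $\hat S(\mathfrak g^* )$. It is known (and assumed) that there is a unique right Hopf action $\triangleleft$ of $U(\mathfrak g)$ on $\hat S(\mathfrak g^* )$ (i.e. $(a\triangleleft u)\triangleleft v=a\triangleleft(uv)$, $(ab)\triangleleft u=\sum(a\triangleleft u_{(1)})(b\triangleleft u_{(2)})$, $1\triangleleft u=\epsilon(u)1$) such that $a\mapsto a\triangleleft\hat x_\alpha$ is the continuous derivation sending $\partial^\beta\mapsto\phi^\beta_\alpha$. For a multiindex $K=(k_1,\dots,k_n)\in\mathbb N_0^n$: $|K|=k_1+\dots+k_n$, $K!=k_1!\cdots k_n!$, $\hat x_K:=\hat x_1^{k_1}\cdots\hat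 x_n^{k_n}\in U(\mathfrak g)$, $\partial^K:=(\partial^1)^{k_1}\cdots(\partial^n)^{k_n}$, and $\delta^K_J$ is $1$ if $K=J$ and $0$ otherwise. *)

theory Defs
  imports "HOL-Library.FuncSet"
begin

text \<open>Indices of the basis of g run over 0..n-1 (instead of 1..n).
An element of the completed symmetric algebra k[[d^0,...,d^(n-1)]] is represented by
its coefficient function (nat => nat) => 'k (coefficient of the monomial d^M);
genuine elements have coefficients zero outside the multiindices.
Structure constants: C l m v is C^l_{m v}.\<close>

definition multiidx :: "nat \<Rightarrow> (nat \<Rightarrow> nat) set" where
  "multiidx n = {K. \<forall>i\<ge>n. K i = 0}"

type_synonym 'k pser = "(nat \<Rightarrow> nat) \<Rightarrow> 'k"

definition pseries :: "nat \<Rightarrow> ('k::zero) pser set" where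
  "pseries n = {P. \<forall>M. M \<notin> multiidx n \<longrightarrow> P M = 0}"

definition mabs :: "nat \<Rightarrow> (nat \<Rightarrow> nat) \<Rightarrow> nat" where
  "mabs n K = (\<Sum>i<n. K i)"

definition mfact :: "nat \<Rightarrow> (nat \<Rightarrow> nat) \<Rightarrow> nat" where
  "mfact n K = (\<Prod>i<n. fact (K i))"

definition mle :: "(nat \<Rightarrow> nat) \<Rightarrow> (nat \<Rightarrow> nat) \<Rightarrow> bool" where
  "mle J K \<longleftrightarrow> (\<forall>i. J i \<le> K i)"

definition mono :: "(nat \<Rightarrow> nat) \<Rightarrow> ('k::{zero,one}) pser" where
  "mono J = (\<lambda>M. if M = J then 1 else 0)"

definition const_term :: "'k pser \<Rightarrow> 'k" where
  "const_term P = P (\<lambda>_. 0)"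

definition pmul :: "('k::comm_semiring_1) pser \<Rightarrow> 'k pser \<Rightarrow> 'k pser" where
  "pmul P Q = (\<lambda>M. \<Sum>A\<in>{A. mle A M}. P A * Q (\<lambda>i. M i - A i))"

definition padd :: "('k::comm_semiring_1) pser \<Rightarrow> 'k pser \<Rightarrow> 'k pser" where
  "padd P Q = (\<lambda>M. P M + Q M)"

definition pderiv_var :: "nat \<Rightarrow> ('k::comm_semiring_1) pser \<Rightarrow> 'k pser" where
  "pderiv_var b P = (\<lambda>M. of_nat (M b + 1) * P (M(b := M b + 1)))"

fun bernoulli :: "nat \<Rightarrow> 'k::field_char_0" where
  "bernoulli m = (if m = 0 then 1
      else - (\<Sum>k<m. of_nat ((m + 1) choose k) * bernoulli k) / of_nat (m + 1))"

text \<open>The matrix \<C>^a_b = C^a_{b c} d^c (entry in row a, column b)\<close>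
definition Cmat :: "(nat \<Rightarrow> nat \<Rightarrow> nat \<Rightarrow> 'k::comm_semiring_1) \<Rightarrow> nat \<Rightarrow> nat \<Rightarrow> nat \<Rightarrow> 'k pser" where
  "Cmat C n a b = (\<lambda>M. \<Sum>c<n. C a b c * mono (\<lambda>i. if i = c then 1 else 0) M)"

fun Cpow :: "(nat \<Rightarrow> nat \<Rightarrow> nat \<Rightarrow> 'k::comm_semiring_1) \<Rightarrow> nat \<Rightarrow> nat \<Rightarrow> nat \<Rightarrow> nat \<Rightarrow> 'k pser" where
  "Cpow C n 0 a b = (if a = b then mono (\<lambda>_. 0) else (\<lambda>_. 0))"
| "Cpow C n (Suc N) a b = (\<lambda>M. \<Sum>c<n. pmul (Cpow C n N a c) (Cmat C n c b) M)"

text \<open>phi = sum_N (-1)^N B_N / N! \<C>^N; since \<C>^N is homogeneous of degree N, the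
coefficient of d^M in phi^a_b comes from the term N = |M| only.\<close>
definition phi :: "(nat \<Rightarrow> nat \<Rightarrow> nat \<Rightarrow> 'k::field_char_0) \<Rightarrow> nat \<Rightarrow> nat \<Rightarrow> nat \<Rightarrow> 'k pser" where
  "phi C n a b = (\<lambda>M. (-1) ^ mabs n M * bernoulli (mabs n M) / fact (mabs n M)
                       * Cpow C n (mabs n M) a b M)"

text \<open>The continuous derivation  P \<mapsto> P \<triangleleft> x_a,  d^b \<mapsto> phi^b_a\<close>
definition act_gen :: "(nat \<Rightarrow> nat \<Rightarrow> nat \<Rightarrow> 'k::field_char_0) \<Rightarrow> nat \<Rightarrow> nat \<Rightarrow> 'k pser \<Rightarrow> 'k pser" where
  "act_gen C n a P = (\<lambda>M. \<Sum>b<n. pmul (pderiv_var b P) (phi C n b a) M)"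

text \<open>P \<triangleleft> x_I for x_I = x_0^{I 0} ... x_{n-1}^{I (n-1)} (right action:
first x_0 is applied I 0 times, then x_1, ...)\<close>
fun act_upto :: "(nat \<Rightarrow> nat \<Rightarrow> nat \<Rightarrow> 'k::field_char_0) \<Rightarrow> nat \<Rightarrow> nat \<Rightarrow> (nat \<Rightarrow> nat) \<Rightarrow> 'k pser \<Rightarrow> 'k pser" where
  "act_upto C n 0 I P = P"
| "act_upto C n (Suc m) I P = (act_gen C n m ^^ I m) (act_upto C n m I P)"

definition act_mono :: "(nat \<Rightarrow> nat \<Rightarrow> nat \<Rightarrow> 'k::field_char_0) \<Rightarrow> nat \<Rightarrow> 'k pser \<Rightarrow> (nat \<Rightarrow> nat) \<Rightarrow> 'k pser" where
  "act_mono C n P I = act_upto C n n I P"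

definition pairing :: "(nat \<Rightarrow> nat \<Rightarrow> nat \<Rightarrow> 'k::field_char_0) \<Rightarrow> nat \<Rightarrow> (nat \<Rightarrow> nat) \<Rightarrow> 'k pser \<Rightarrow> 'k" where
  "pairing C n I P = const_term (act_mono C n P I)"

definition lie_structure_constants :: "nat \<Rightarrow> (nat \<Rightarrow> nat \<Rightarrow> nat \<Rightarrow> 'k::field_char_0) \<Rightarrow> bool" where
  "lie_structure_constants n C \<longleftrightarrow>
     (\<forall>l<n. \<forall>m<n. \<forall>v<n. C l m v = - C l v m) \<and>
     (\<forall>m<n. \<forall>v<n. \<forall>l<n. \<forall>e<n.
        (\<Sum>d<n. C d m v * C e d l + C d v l * C e d m + C d l m * C e d v) = 0)"

end

theory Submission
  imports Defs
begin

text \<open>Since \<open>\<phi> = 1 + O(\<partial>)\<close>, the derivation \<open>P \<mapsto> P \<triangleleft> x\<^sub>a\<close> lowers the order of a power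
series by at most one, and in the lowest degree it acts as the formal partial derivative
by \<open>\<partial>\<^sup>a\<close>. Hence \<open>\<partial>\<^sup>J \<triangleleft> x\<^sub>I\<close> has order at least \<open>|J| - |I|\<close>, and for \<open>|I| = |J|\<close> its
constant term is that of \<open>\<partial>\<^sub>I \<partial>\<^sup>J\<close>, namely \<open>I! \<delta>\<^sup>I\<^sub>J\<close>. So the matrix
\<open>\<langle>x\<^sub>J, \<partial>\<^sup>L\<rangle>\<^sub>\<phi>\<close> is triangular with respect to the total degree, with diagonal \<open>J!\<close>;
moreover \<open>\<langle>x\<^sub>J, P\<rangle>\<^sub>\<phi>\<close> only involves the coefficients of \<open>P\<close> of degree at most \<open>|J|\<close>.
The dual family \<open>\<partial>\<^sup>{\<^sup>K\<^sup>}\<close> is then the unique solution of a triangular linear system.\<close>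

lemma le_mabs: "i < n \<Longrightarrow> L i \<le> mabs n L"
  unfolding mabs_def by (intro member_le_sum) auto

lemma finite_multiidx_mabs_le: "finite {L \<in> multiidx n. mabs n L \<le> k}"
proof -
  have "{L \<in> multiidx n. mabs n L \<le> k} \<subseteq>
        {f. \<forall>x. (x \<in> {..<n} \<longrightarrow> f x \<in> {..k}) \<and> (x \<notin> {..<n} \<longrightarrow> f x = 0)}"
    using le_mabs unfolding multiidx_def by (auto intro: order.trans)
  then show ?thesis by (rule finite_subset) (intro finite_set_of_finite_funs, auto)
qed

lemma mle_multiidx:
  assumes "mle A M" and "M \<in> multiidx n"
  shows "A \<in> multiidx n"
  unfolding multiidx_def
proof (intro CollectI allI impI)
  fix i assume "n \<le> i"
  then have "M i = 0" using assms(2) by (simp add: multiidx_def)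
  then show "A i = 0" using assms(1) unfolding mle_def by (metis le_0_eq)
qed

lemma mabs_mono: "mle A M \<Longrightarrow> mabs n A \<le> mabs n M"
  unfolding mle_def mabs_def by (intro sum_mono) auto

lemma finite_mle: "M \<in> multiidx n \<Longrightarrow> finite {A. mle A M}"
  by (rule finite_subset[OF _ finite_multiidx_mabs_le]) (use mle_multiidx mabs_mono in blast)

lemma mle_mabs_eq:
  assumes "mle A M" "M \<in> multiidx n" "mabs n M \<le> mabs n A"
  shows "A = M"
proof (rule ccontr)
  assume "A \<noteq> M"
  then obtain i where i: "A i \<noteq> M i" by auto
  have "A \<in> multiidx n" using assms mle_multiidx by blast
  then have "i < n" using i assms(2) unfolding multiidx_def by (cases "i < n") auto
  moreover have "A i < M i" using i assms(1) unfolding mle_def using le_neq_implies_less by blast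
  ultimately have "mabs n A < mabs n M" unfolding mabs_def
    using assms(1) unfolding mle_def by (intro sum_strict_mono_ex1) auto
  then show False using assms(3) by simp
qed

lemma mabs_diff: "mle A M \<Longrightarrow> mabs n M = mabs n A + mabs n (\<lambda>i. M i - A i)"
  unfolding mabs_def mle_def by (simp add: sum.distrib[symmetric])

lemma mabs_upd_Suc: "b < n \<Longrightarrow> mabs n (M(b := M b + 1)) = mabs n M + 1"
proof -
  assume b: "b < n"
  have "mabs n (M(b := M b + 1)) = (\<Sum>i<n. M i + (if i = b then 1 else 0))"
    unfolding mabs_def by (intro sum.cong) auto
  also have "\<dots> = mabs n M + 1" unfolding mabs_def using b by (simp add: sum.distrib)
  finally show ?thesis .
qed

lemma multiidx_upd: "b < n \<Longrightarrow> M(b := x) \<in> multiidx n \<longleftrightarrow> M \<in> multiidx n"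
  unfolding multiidx_def by auto

lemma mabs_zero [simp]: "mabs n (\<lambda>_. 0) = 0"
  by (simp add: mabs_def)

lemma multiidx_zero [simp]: "(\<lambda>_. 0) \<in> multiidx n"
  by (simp add: multiidx_def)

lemma mfact_pos: "0 < mfact n K"
  unfolding mfact_def by (simp add: prod_pos)

lemma pseries_eqI:
  assumes "P \<in> pseries n" "Q \<in> pseries n" "\<And>M. M \<in> multiidx n \<Longrightarrow> P M = Q M"
  shows "P = Q"
proof
  fix M
  show "P M = Q M" using assms unfolding pseries_def by (cases "M \<in> multiidx n") auto
qed

definition order_ge :: "nat \<Rightarrow> ('k::zero) pser \<Rightarrow> nat \<Rightarrow> bool" where
  "order_ge n P d \<longleftrightarrow> (\<forall>M. P M \<noteq> 0 \<longrightarrow> M \<in> multiidx n \<and> d \<le> mabs n M)"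

lemma order_ge_mono: "J \<in> multiidx n \<Longrightarrow> order_ge n (mono J) (mabs n J)"
  unfolding order_ge_def mono_def by auto

lemma order_ge_const_term: "order_ge n P d \<Longrightarrow> 0 < d \<Longrightarrow> const_term P = 0"
  unfolding order_ge_def const_term_def by (metis mabs_zero not_le)

lemma order_ge_pmul:
  assumes P: "order_ge n P d" and Q: "order_ge n Q e"
  shows "order_ge n (pmul P Q) (d + e)"
  unfolding order_ge_def
proof (intro allI impI)
  fix M assume "pmul P Q M \<noteq> 0"
  then obtain A where "A \<in> {A. mle A M}" and nz: "P A * Q (\<lambda>i. M i - A i) \<noteq> 0"
    unfolding pmul_def by (rule sum.not_neutral_contains_not_neutral)
  then have A: "mle A M" by simp
  from nz have "P A \<noteq> 0" "Q (\<lambda>i. M i - A i) \<noteq> 0" by auto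
  then have "A \<in> multiidx n" "d \<le> mabs n A"
    and "(\<lambda>i. M i - A i) \<in> multiidx n" "e \<le> mabs n (\<lambda>i. M i - A i)"
    using P Q unfolding order_ge_def by blast+
  moreover have "M i = A i + (M i - A i)" for i
    using A unfolding mle_def by (simp add: le_add_diff_inverse)
  ultimately show "M \<in> multiidx n \<and> d + e \<le> mabs n M"
    using mabs_diff[OF A, of n] unfolding multiidx_def by auto
qed

lemma order_ge_sum:
  "(\<And>b. b \<in> B \<Longrightarrow> order_ge n (f b) d) \<Longrightarrow> order_ge n (\<lambda>M. \<Sum>b\<in>B. f b M) d"
  unfolding order_ge_def by (metis sum.not_neutral_contains_not_neutral)

lemma order_ge_Cpow: "order_ge n (Cpow C n N a b) 0"
proof (induction N arbitrary: a b)
  case 0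
  then show ?case by (auto simp: order_ge_def mono_def)
next
  case (Suc N)
  have "order_ge n (Cmat C n c b) 0" for c
    unfolding Cmat_def by (rule order_ge_sum) (auto simp: order_ge_def mono_def multiidx_def)
  then show ?case
    unfolding Cpow.simps by (intro order_ge_sum) (use order_ge_pmul[OF Suc] in fastforce)
qed

lemma order_ge_phi: "order_ge n (phi C n b a) 0"
  using order_ge_Cpow[of n C _ b a] unfolding order_ge_def phi_def by fastforce

lemma order_ge_pderiv_var:
  assumes b: "b < n" and P: "order_ge n P d"
  shows "order_ge n (pderiv_var b P) (d - 1)"
  unfolding order_ge_def
proof (intro allI impI)
  fix M assume "pderiv_var b P M \<noteq> 0"
  then have "P (M(b := M b + 1)) \<noteq> 0" unfolding pderiv_var_def by auto
  then have "M(b := M b + 1) \<in> multiidx n" "d \<le> mabs n (M(b := M b + 1))"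
    using P unfolding order_ge_def by blast+
  then show "M \<in> multiidx n \<and> d - 1 \<le> mabs n M"
    using multiidx_upd[OF b] mabs_upd_Suc[OF b] by auto
qed

lemma order_ge_act_gen: "order_ge n P d \<Longrightarrow> order_ge n (act_gen C n a P) (d - 1)"
  unfolding act_gen_def
  by (rule order_ge_sum) (use order_ge_pmul[OF order_ge_pderiv_var order_ge_phi] in auto)

lemma order_ge_act_upto: "order_ge n P d \<Longrightarrow> order_ge n (act_upto C n m I P) (d - (\<Sum>i<m. I i))"
proof (induction m)
  case 0
  then show ?case by simp
next
  case (Suc m)
  have "order_ge n ((act_gen C n m ^^ k) (act_upto C n m I P)) (d - (\<Sum>i<m. I i) - k)" for k
    by (induction k) (use Suc in \<open>auto dest: order_ge_act_gen[where C = C and a = m]\<close>)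
  then show ?case by simp
qed

lemma order_ge_act_mono:
  "J \<in> multiidx n \<Longrightarrow> order_ge n (act_mono C n (mono J) I) (mabs n J - mabs n I)"
  unfolding act_mono_def mabs_def[of n I] by (rule order_ge_act_upto[OF order_ge_mono])

lemma phi_at_zero: "phi C n b a (\<lambda>_. 0) = (if b = a then 1 else 0)"
  unfolding phi_def by (simp add: mono_def)

lemma act_gen_eq_pderiv_var_lowest:
  assumes a: "a < n" and P: "order_ge n P d" and M: "M \<in> multiidx n" "mabs n M = d - 1"
  shows "act_gen C n a P M = pderiv_var a P M"
proof -
  have "pderiv_var b P A = 0" if "b < n" "mle A M" "A \<noteq> M" for b A
  proof (rule ccontr)
    assume "pderiv_var b P A \<noteq> 0"
    then have "d - 1 \<le> mabs n A" using order_ge_pderiv_var[OF \<open>b < n\<close> P] unfolding order_ge_def by blast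
    then show False using mle_mabs_eq[of A M n] that M by simp
  qed
  then have "pmul (pderiv_var b P) (phi C n b a) M = pderiv_var b P M * phi C n b a (\<lambda>_. 0)"
    if "b < n" for b
    unfolding pmul_def using that finite_mle[OF M(1)]
    by (subst sum.mono_neutral_right[where S = "{M}"]) (auto simp: mle_def)
  then have "act_gen C n a P M = (\<Sum>b<n. if b = a then pderiv_var b P M else 0)"
    unfolding act_gen_def by (intro sum.cong) (simp_all add: phi_at_zero)
  then show ?thesis using a by simp
qed

definition leading_part_eq :: "nat \<Rightarrow> ('k::zero) pser \<Rightarrow> 'k pser \<Rightarrow> nat \<Rightarrow> bool" where
  "leading_part_eq n P Q d \<longleftrightarrow> order_ge n P d \<and> (\<forall>M\<in>multiidx n. mabs n M = d \<longrightarrow> P M = Q M)"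

lemma leading_part_eq_act_gen:
  assumes a: "a < n" and d: "0 < d" and PQ: "leading_part_eq n P Q d"
  shows "leading_part_eq n (act_gen C n a P) (pderiv_var a Q) (d - 1)"
  unfolding leading_part_eq_def
proof (intro conjI ballI impI)
  show "order_ge n (act_gen C n a P) (d - 1)"
    using PQ order_ge_act_gen unfolding leading_part_eq_def by blast
next
  fix M assume M: "M \<in> multiidx n" "mabs n M = d - 1"
  have "M(a := M a + 1) \<in> multiidx n" "mabs n (M(a := M a + 1)) = d"
    using M d multiidx_upd[OF a] mabs_upd_Suc[OF a] by auto
  then have "P (M(a := M a + 1)) = Q (M(a := M a + 1))"
    using PQ unfolding leading_part_eq_def by blast
  then have "pderiv_var a P M = pderiv_var a Q M" unfolding pderiv_var_def by simp
  moreover have "act_gen C n a P M = pderiv_var a P M"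
    using act_gen_eq_pderiv_var_lowest[OF a _ M] PQ unfolding leading_part_eq_def by blast
  ultimately show "act_gen C n a P M = pderiv_var a Q M" by simp
qed

fun pderiv_upto :: "nat \<Rightarrow> (nat \<Rightarrow> nat) \<Rightarrow> ('k::comm_semiring_1) pser \<Rightarrow> 'k pser" where
  "pderiv_upto 0 I P = P"
| "pderiv_upto (Suc m) I P = (pderiv_var m ^^ I m) (pderiv_upto m I P)"

lemma leading_part_eq_act_upto:
  assumes "m \<le> n" "(\<Sum>i<m. I i) \<le> d" "leading_part_eq n P Q d"
  shows "leading_part_eq n (act_upto C n m I P) (pderiv_upto m I Q) (d - (\<Sum>i<m. I i))"
  using assms
proof (induction m)
  case 0
  then show ?case by simp
next
  case (Suc m)
  have "leading_part_eq n ((act_gen C n m ^^ k) (act_upto C n m I P)) ((pderiv_var m ^^ k) (pderiv_upto m I Q))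
      (d - (\<Sum>i<m. I i) - k)" if "k \<le> I m" for k
    using that
  proof (induction k)
    case 0
    then show ?case using Suc by simp
  next
    case (Suc k)
    then show ?case using leading_part_eq_act_gen[of m n "d - (\<Sum>i<m. I i) - k"] \<open>Suc m \<le> n\<close>
        \<open>(\<Sum>i<Suc m. I i) \<le> d\<close> by simp
  qed
  then show ?case by simp
qed

lemma pderiv_var_funpow:
  "(pderiv_var a ^^ k) P M = pochhammer (of_nat (M a + 1)) k * P (M(a := M a + k))"
proof (induction k arbitrary: M)
  case 0
  then show ?case by simp
next
  case (Suc k)
  have "(pderiv_var a ^^ Suc k) P M = of_nat (M a + 1) * (pderiv_var a ^^ k) P (M(a := M a + 1))"
    by (simp add: pderiv_var_def)
  also have "\<dots> = of_nat (M a + 1) * (pochhammer (of_nat (M a + 1) + 1) k * P (M(a := M a + Suc k)))"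
    unfolding Suc.IH fun_upd_same fun_upd_upd by (simp add: add_ac)
  also have "\<dots> = pochhammer (of_nat (M a + 1)) (Suc k) * P (M(a := M a + Suc k))"
    by (simp only: pochhammer_rec mult.assoc)
  finally show ?case .
qed

lemma pderiv_upto_eq:
  "pderiv_upto m I Q M =
     (\<Prod>i<m. pochhammer (of_nat (M i + 1)) (I i)) * Q (\<lambda>i. if i < m then M i + I i else M i)"
proof (induction m arbitrary: M)
  case 0
  then show ?case by simp
next
  case (Suc m)
  let ?M' = "M(m := M m + I m)"
  have "(\<Prod>i<m. pochhammer (of_nat (?M' i + 1)) (I i)) = (\<Prod>i<m. pochhammer (of_nat (M i + 1)) (I i))"
    by (intro prod.cong) auto
  moreover have "(\<lambda>i. if i < m then ?M' i + I i else ?M' i) = (\<lambda>i. if i < Suc m then M i + I i else M i)"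
    by (auto simp: fun_eq_iff less_Suc_eq)
  ultimately show ?case by (simp add: pderiv_var_funpow Suc.IH mult_ac)
qed

lemma const_term_act_mono_mono:
  assumes I: "I \<in> multiidx n" and J: "J \<in> multiidx n" and eq: "mabs n I = mabs n J"
  shows "const_term (act_mono C n (mono J) I) = of_nat (mfact n I) * (if I = J then 1 else 0)"
proof -
  have "leading_part_eq n (mono J) (mono J) (mabs n J)"
    using order_ge_mono[OF J] unfolding leading_part_eq_def by simp
  then have "leading_part_eq n (act_mono C n (mono J) I) (pderiv_upto n I (mono J)) 0"
    using leading_part_eq_act_upto[of n n I "mabs n J"] eq unfolding act_mono_def mabs_def by simp
  then have "const_term (act_mono C n (mono J) I) = pderiv_upto n I (mono J) (\<lambda>_. 0)"
    unfolding leading_part_eq_def const_term_def by simp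
  also have "\<dots> = (\<Prod>i<n. pochhammer 1 (I i)) * mono J I"
  proof -
    have "(\<lambda>i. if i < n then 0 + I i else (0::nat)) = I"
      using I by (auto simp: multiidx_def fun_eq_iff)
    then show ?thesis by (simp add: pderiv_upto_eq)
  qed
  also have "(\<Prod>i<n. pochhammer 1 (I i)) = (of_nat (mfact n I) :: 'a)"
    by (simp add: mfact_def of_nat_prod flip: pochhammer_fact)
  finally show ?thesis by (simp add: mono_def)
qed

lemma act_gen_sum:
  "act_gen C n a (\<lambda>M. \<Sum>L\<in>F. c L * f L M) = (\<lambda>M. \<Sum>L\<in>F. c L * act_gen C n a (f L) M)"
proof
  fix M
  let ?t = "\<lambda>L b A. c L * (of_nat (A b + 1) * f L (A(b := A b + 1)) * phi C n b a (\<lambda>i. M i - A i))"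
  have "act_gen C n a (\<lambda>M. \<Sum>L\<in>F. c L * f L M) M = (\<Sum>b<n. \<Sum>A | mle A M. \<Sum>L\<in>F. ?t L b A)"
    unfolding act_gen_def pmul_def pderiv_var_def
    by (simp add: sum_distrib_left sum_distrib_right mult_ac)
  also have "\<dots> = (\<Sum>L\<in>F. \<Sum>b<n. \<Sum>A | mle A M. ?t L b A)"
    by (subst sum.swap) (simp add: sum.swap[of _ "{A. mle A M}"])
  also have "\<dots> = (\<Sum>L\<in>F. c L * act_gen C n a (f L) M)"
    unfolding act_gen_def pmul_def pderiv_var_def by (simp add: sum_distrib_left)
  finally show "act_gen C n a (\<lambda>M. \<Sum>L\<in>F. c L * f L M) M = (\<Sum>L\<in>F. c L * act_gen C n a (f L) M)" .
qed

lemma act_gen_add: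
  "act_gen C n a (\<lambda>M. P M + Q M) = (\<lambda>M. act_gen C n a P M + act_gen C n a Q M)"
  unfolding act_gen_def pmul_def pderiv_var_def
  by (simp add: fun_eq_iff distrib_left distrib_right sum.distrib)

lemma act_upto_sum:
  "act_upto C n m I (\<lambda>M. \<Sum>L\<in>F. c L * f L M) = (\<lambda>M. \<Sum>L\<in>F. c L * act_upto C n m I (f L) M)"
proof (induction m)
  case (Suc m)
  have "(act_gen C n m ^^ k) (\<lambda>M. \<Sum>L\<in>F. c L * g L M) = (\<lambda>M. \<Sum>L\<in>F. c L * (act_gen C n m ^^ k) (g L) M)"
    for k g by (induction k) (simp_all add: act_gen_sum)
  with Suc show ?case by simp
qed simp

lemma act_upto_add:
  "act_upto C n m I (\<lambda>M. P M + Q M) = (\<lambda>M. act_upto C n m I P M + act_upto C n m I Q M)"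
proof (induction m)
  case (Suc m)
  have "(act_gen C n m ^^ k) (\<lambda>M. P' M + Q' M) = (\<lambda>M. (act_gen C n m ^^ k) P' M + (act_gen C n m ^^ k) Q' M)"
    for k P' Q' by (induction k) (simp_all add: act_gen_add)
  with Suc show ?case by simp
qed simp

lemma pairing_eq_sum_coeffs:
  assumes P: "P \<in> pseries n" and J: "J \<in> multiidx n"
  shows "pairing C n J P = (\<Sum>L\<in>{L \<in> multiidx n. mabs n L \<le> mabs n J}. pairing C n J (mono L) * P L)"
proof -
  define F where "F = {L \<in> multiidx n. mabs n L \<le> mabs n J}"
  define H where "H = (\<lambda>M. if M \<in> F then 0 else P M)"
  have decomp: "P = (\<lambda>M. (\<Sum>L\<in>F. P L * mono L M) + H M)"
  proof
    fix M
    have "(\<Sum>L\<in>F. P L * mono L M) = (\<Sum>L\<in>F. if M = L then P L else 0)"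
      by (intro sum.cong) (auto simp: mono_def)
    then show "P M = (\<Sum>L\<in>F. P L * mono L M) + H M"
      using finite_multiidx_mabs_le by (simp add: H_def F_def)
  qed
  have "order_ge n H (mabs n J + 1)"
    using P unfolding order_ge_def H_def F_def pseries_def by auto
  then have H0: "const_term (act_upto C n n J H) = 0"
    using order_ge_act_upto[of n H _ C n J] by (intro order_ge_const_term) (auto simp: mabs_def)
  have "act_upto C n n J P = act_upto C n n J (\<lambda>M. (\<Sum>L\<in>F. P L * mono L M) + H M)"
    using decomp by (rule arg_cong)
  also have "\<dots> = (\<lambda>M. (\<Sum>L\<in>F. P L * act_upto C n n J (mono L) M) + act_upto C n n J H M)"
    by (simp only: act_upto_add act_upto_sum)
  finally show ?thesis
    using H0 unfolding pairing_def act_mono_def F_def const_term_def by (simp add: mult.commute)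
qed

lemma pairing_mono_upper:
  assumes "J \<in> multiidx n" "L \<in> multiidx n" "mabs n J \<le> mabs n L" "L \<noteq> J"
  shows "pairing C n J (mono L) = 0"
proof (cases "mabs n J < mabs n L")
  case True
  then show ?thesis
    unfolding pairing_def using order_ge_act_mono[OF assms(2)] by (rule_tac order_ge_const_term) auto
next
  case False
  then show ?thesis
    unfolding pairing_def using assms const_term_act_mono_mono[OF assms(1,2)] by simp
qed

lemma pairing_mono_diag: "J \<in> multiidx n \<Longrightarrow> pairing C n J (mono J) = of_nat (mfact n J)"
  unfolding pairing_def using const_term_act_mono_mono[of J n J C] by simp

function tri_solve :: "('i \<Rightarrow> 'i \<Rightarrow> 'k::field) \<Rightarrow> ('i \<Rightarrow> nat) \<Rightarrow> 'i set \<Rightarrow> ('i \<Rightarrow> 'k) \<Rightarrow> 'i \<Rightarrow> 'k" where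
  "tri_solve A r S e J = (e J - (\<Sum>L\<in>{L \<in> S. r L < r J}. A J L * tri_solve A r S e L)) / A J J"
  by auto
termination by (relation "measure (\<lambda>(A, r, S, e, J). r J)") auto

declare tri_solve.simps [simp del]

lemma triangular_system_iff:
  fixes A :: "'i \<Rightarrow> 'i \<Rightarrow> 'k::field"
  assumes fin: "\<And>m. finite {L \<in> S. r L \<le> m}"
    and diag: "\<And>J. J \<in> S \<Longrightarrow> A J J \<noteq> 0"
    and upper: "\<And>J L. J \<in> S \<Longrightarrow> L \<in> S \<Longrightarrow> r J \<le> r L \<Longrightarrow> L \<noteq> J \<Longrightarrow> A J L = 0"
  shows "(\<forall>J\<in>S. (\<Sum>L\<in>{L \<in> S. r L \<le> r J}. A J L * c L) = e J) \<longleftrightarrow>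
         (\<forall>J\<in>S. c J = tri_solve A r S e J)"
proof -
  have split: "(\<Sum>L\<in>{L \<in> S. r L \<le> r J}. A J L * c' L) =
      (\<Sum>L\<in>{L \<in> S. r L < r J}. A J L * c' L) + A J J * c' J" if J: "J \<in> S" for J c'
  proof -
    have fin_lt: "finite {L \<in> S. r L < r J}" and fin_eq: "finite {L \<in> S. r L = r J}"
      by (rule finite_subset[OF _ fin[of "r J"]], auto)+
    have "{L \<in> S. r L \<le> r J} = {L \<in> S. r L < r J} \<union> {L \<in> S. r L = r J}" by auto
    then have "(\<Sum>L\<in>{L \<in> S. r L \<le> r J}. A J L * c' L) =
        (\<Sum>L\<in>{L \<in> S. r L < r J}. A J L * c' L) + (\<Sum>L\<in>{L \<in> S. r L = r J}. A J L * c' L)"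
      using fin_lt fin_eq by (simp add: sum.union_disjoint disjoint_iff)
    also have "(\<Sum>L\<in>{L \<in> S. r L = r J}. A J L * c' L) = A J J * c' J"
      using J upper fin_eq by (subst sum.mono_neutral_right[where S = "{J}"]) auto
    finally show ?thesis .
  qed
  have solve: "c J = tri_solve A r S e J \<longleftrightarrow>
      (\<Sum>L\<in>{L \<in> S. r L < r J}. A J L * tri_solve A r S e L) + A J J * c J = e J" if "J \<in> S" for J
    using diag[OF that] by (subst tri_solve.simps) (auto simp: field_simps)
  show ?thesis
  proof
    assume eqs: "\<forall>J\<in>S. (\<Sum>L\<in>{L \<in> S. r L \<le> r J}. A J L * c L) = e J"
    have "J \<in> S \<Longrightarrow> c J = tri_solve A r S e J" for J
    proof (induction "r J" arbitrary: J rule: less_induct)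
      case less
      then have "(\<Sum>L\<in>{L \<in> S. r L < r J}. A J L * c L) =
          (\<Sum>L\<in>{L \<in> S. r L < r J}. A J L * tri_solve A r S e L)"
        by (intro sum.cong) auto
      moreover have "(\<Sum>L\<in>{L \<in> S. r L < r J}. A J L * c L) + A J J * c J = e J"
        using eqs split[OF less.prems, of c] less.prems by simp
      ultimately show ?case using solve[OF less.prems] by simp
    qed
    then show "\<forall>J\<in>S. c J = tri_solve A r S e J" by blast
  next
    assume sol: "\<forall>J\<in>S. c J = tri_solve A r S e J"
    show "\<forall>J\<in>S. (\<Sum>L\<in>{L \<in> S. r L \<le> r J}. A J L * c L) = e J"
    proof
      fix J assume J: "J \<in> S"
      have "(\<Sum>L\<in>{L \<in> S. r L < r J}. A J L * c L) =
          (\<Sum>L\<in>{L \<in> S. r L < r J}. A J L * tri_solve A r S e L)"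
        using sol by (intro sum.cong) auto
      then show "(\<Sum>L\<in>{L \<in> S. r L \<le> r J}. A J L * c L) = e J"
        using split[OF J] solve[OF J] sol J by simp
    qed
  qed
qed

lemma pairing_mono_mle:
  assumes J: "J \<in> multiidx n" and K: "K \<in> multiidx n" and JK: "mle J K"
  shows "pairing C n J (mono K) = of_nat (mfact n K) * (if K = J then 1 else 0)"
proof (cases "K = J")
  case True
  then show ?thesis using pairing_mono_diag[OF J] by simp
next
  case False
  then show ?thesis using pairing_mono_upper[OF J K mabs_mono[OF JK]] by simp
qed

definition dual_monomial :: "(nat \<Rightarrow> nat \<Rightarrow> nat \<Rightarrow> 'k::field_char_0) \<Rightarrow> nat \<Rightarrow> (nat \<Rightarrow> nat) \<Rightarrow> 'k pser" where
  "dual_monomial C n K = (\<lambda>M. if M \<in> multiidx n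
     then tri_solve (\<lambda>J L. pairing C n J (mono L)) (mabs n) (multiidx n)
            (\<lambda>J. of_nat (mfact n K) * (if K = J then 1 else 0)) M
     else 0)"

lemma dual_monomial_pseries: "dual_monomial C n K \<in> pseries n"
  unfolding dual_monomial_def pseries_def by simp

lemma pairing_eq_iff_dual_monomial:
  assumes P: "P \<in> pseries n"
  shows "(\<forall>J\<in>multiidx n. pairing C n J P = of_nat (mfact n K) * (if K = J then 1 else 0))
    \<longleftrightarrow> P = dual_monomial C n K"
proof -
  let ?e = "\<lambda>J. of_nat (mfact n K) * (if K = J then 1 else 0)"
  have "(\<forall>J\<in>multiidx n. pairing C n J P = ?e J) \<longleftrightarrow>
      (\<forall>J\<in>multiidx n. (\<Sum>L\<in>{L \<in> multiidx n. mabs n L \<le> mabs n J}. pairing C n J (mono L) * P L) = ?e J)"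
    using pairing_eq_sum_coeffs[OF P] by simp
  also have "\<dots> \<longleftrightarrow> (\<forall>L\<in>multiidx n.
      P L = tri_solve (\<lambda>J L. pairing C n J (mono L)) (mabs n) (multiidx n) ?e L)"
    by (rule triangular_system_iff)
      (simp_all add: finite_multiidx_mabs_le pairing_mono_diag mfact_pos pairing_mono_upper)
  also have "\<dots> \<longleftrightarrow> P = dual_monomial C n K"
  proof
    assume "\<forall>L\<in>multiidx n. P L = tri_solve (\<lambda>J L. pairing C n J (mono L)) (mabs n) (multiidx n) ?e L"
    then show "P = dual_monomial C n K"
      by (intro pseries_eqI[OF P dual_monomial_pseries]) (simp add: dual_monomial_def)
  qed (simp add: dual_monomial_def)
  finally show ?thesis .
qed

lemma ex1_dual_family:
  "\<exists>!d. d \<in> (multiidx n \<rightarrow>\<^sub>E pseries n) \<and>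
     (\<forall>K\<in>multiidx n. \<forall>J\<in>multiidx n.
        pairing C n J (d K) = of_nat (mfact n K) * (if K = J then 1 else 0))"
proof (rule ex1I[of _ "restrict (dual_monomial C n) (multiidx n)"])
  fix d assume d: "d \<in> multiidx n \<rightarrow>\<^sub>E pseries n \<and>
      (\<forall>K\<in>multiidx n. \<forall>J\<in>multiidx n.
         pairing C n J (d K) = of_nat (mfact n K) * (if K = J then 1 else 0))"
  then have "d K = dual_monomial C n K" if "K \<in> multiidx n" for K
    using pairing_eq_iff_dual_monomial[of "d K"] that by blast
  then show "d = restrict (dual_monomial C n) (multiidx n)"
    using d by (intro PiE_ext[of d "multiidx n" "\<lambda>_. pseries n"]) (auto simp: dual_monomial_pseries)
qed (use pairing_eq_iff_dual_monomial[OF dual_monomial_pseries, where C = C and K = K for K] in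
      \<open>simp add: dual_monomial_pseries\<close>)

theorem lemma1:
  fixes C :: "nat \<Rightarrow> nat \<Rightarrow> nat \<Rightarrow> 'k::field_char_0" and n :: nat
  assumes "lie_structure_constants n C"
  shows
    "(\<forall>I\<in>multiidx n. \<forall>J\<in>multiidx n. mabs n I < mabs n J \<longrightarrow>
        (\<forall>M. act_mono C n (mono J) I M \<noteq> 0 \<longrightarrow> mabs n M \<ge> mabs n J - mabs n I))
   \<and> (\<forall>I\<in>multiidx n. \<forall>J\<in>multiidx n. mabs n I = mabs n J \<longrightarrow>
        const_term (act_mono C n (mono J) I) - of_nat (mfact n I) * (if I = J then 1 else 0) = 0)
   \<and> (\<forall>J\<in>multiidx n. \<forall>K\<in>multiidx n. mle J K \<longrightarrow>
        pairing C n J (mono K) = of_nat (mfact n K) * (if K = J then 1 else 0))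
   \<and> (\<exists>!d. d \<in> (multiidx n \<rightarrow>\<^sub>E pseries n) \<and>
        (\<forall>K\<in>multiidx n. \<forall>J\<in>multiidx n.
           pairing C n J (d K) = of_nat (mfact n K) * (if K = J then 1 else 0)))"
  using order_ge_act_mono[of _ n C] ex1_dual_family[of n C] unfolding order_ge_def
  by (intro conjI ballI impI allI) (simp_all add: const_term_act_mono_mono pairing_mono_mle)

end
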